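(* Let $n\ge 2$, let $\mathcal{S}\subseteq(\mathbb{C}^d)^{\otimes n}$ be the permutation-symmetric subspace, and let $B$ be a $d\times d$ complex matrix with distinct eigenvalues $\lambda_1,\ldots,\lambda_p$ and corresponding generalized eigenspaces $V_1,\ldots,V_p\subseteq\mathbb{C}^d$ (so $\mathbb{C}^d=V_1\oplus\cdots\oplus V_p$). If $|\psi\rangle\in\mathcal{S}$ satisfies $B_{(1)}|\psi\rangle\in\mathcal{S}$, then $$|\psi\rangle\in\bigoplus_{i=1}^p\mathrm{Sym}^n(V_i),$$ where $\mathrm{Sym}^n(V_i)$ denotes the permutation-symmetric subspace of $V_i^{\otimes n}\subseteq(\mathbb{C}^d)^{\otimes n}$.
   Context: $\mathcal{S}$ is the set of vectors in $(\mathbb{C}^d)^{\otimes n}$ invariant under all permutations of the $n$ tensor factors. For a $d\times d$ matrix $Y$, $Y_{(1)}$ denotes $Y\otimes\mathbb{I}\otimes\cdots\otimes\mathbb{I}$ on $(\mathbb{C}^d)^{\otimes n}$. *)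

theory Defs
  imports "HOL-Combinatorics.Permutations" "Jordan_Normal_Form.Char_Poly"
begin

text \<open>Tensors in (C^d)^{tensor n} are represented as coefficient functions on
multi-indices i :: nat => nat with i k < d for k < n and i k = 0 for k >= n
(the basis e_{i 0} tensor ... tensor e_{i (n-1)}); values outside the index set are 0.\<close>

definition idx :: "nat \<Rightarrow> nat \<Rightarrow> (nat \<Rightarrow> nat) set" where
  "idx n d = {i. (\<forall>k<n. i k < d) \<and> (\<forall>k\<ge>n. i k = 0)}"

definition tensor_space :: "nat \<Rightarrow> nat \<Rightarrow> ((nat \<Rightarrow> nat) \<Rightarrow> complex) set" where
  "tensor_space n d = {\<psi>. \<forall>i. i \<notin> idx n d \<longrightarrow> \<psi> i = 0}"

definition sym_space :: "nat \<Rightarrow> nat \<Rightarrow> ((nat \<Rightarrow> nat) \<Rightarrow> complex) set" where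
  "sym_space n d = {\<psi> \<in> tensor_space n d.
      \<forall>\<sigma>. \<sigma> permutes {..<n} \<longrightarrow> (\<forall>i\<in>idx n d. \<psi> (i \<circ> \<sigma>) = \<psi> i)}"

text \<open>Y_(1) = Y tensor I tensor ... tensor I, acting on the first factor (index 0).\<close>
definition op_first :: "complex mat \<Rightarrow> nat \<Rightarrow> nat \<Rightarrow> ((nat \<Rightarrow> nat) \<Rightarrow> complex) \<Rightarrow> ((nat \<Rightarrow> nat) \<Rightarrow> complex)" where
  "op_first Y n d \<psi> = (\<lambda>i. if i \<in> idx n d then (\<Sum>j<d. Y $$ (i 0, j) * \<psi> (i(0 := j))) else 0)"

definition prod_tensor :: "nat \<Rightarrow> nat \<Rightarrow> (nat \<Rightarrow> complex vec) \<Rightarrow> ((nat \<Rightarrow> nat) \<Rightarrow> complex)" where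
  "prod_tensor n d vs = (\<lambda>i. if i \<in> idx n d then (\<Prod>k<n. vs k $ i k) else 0)"

definition tensor_power :: "nat \<Rightarrow> nat \<Rightarrow> complex vec set \<Rightarrow> ((nat \<Rightarrow> nat) \<Rightarrow> complex) set" where
  "tensor_power n d V = {\<psi>. \<exists>(m::nat) (c :: nat \<Rightarrow> complex) (vs :: nat \<Rightarrow> nat \<Rightarrow> complex vec).
      (\<forall>j<m. \<forall>k<n. vs j k \<in> V) \<and> \<psi> = (\<lambda>i. \<Sum>j<m. c j * prod_tensor n d (vs j) i)}"

definition sym_power :: "nat \<Rightarrow> nat \<Rightarrow> complex vec set \<Rightarrow> ((nat \<Rightarrow> nat) \<Rightarrow> complex) set" where
  "sym_power n d V = tensor_power n d V \<inter> sym_space n d"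

definition gen_eigenspace :: "complex mat \<Rightarrow> complex \<Rightarrow> complex vec set" where
  "gen_eigenspace B c = {v \<in> carrier_vec (dim_row B).
      \<exists>k::nat. ((B - c \<cdot>\<^sub>m 1\<^sub>m (dim_row B)) ^\<^sub>m k) *\<^sub>v v = 0\<^sub>v (dim_row B)}"

end

theory Submission
  imports Defs "Jordan_Normal_Form.Schur_Decomposition" "HOL-Computational_Algebra.Field_as_Ring"
begin

text \<open>The projection of \<open>\<complex>\<^sup>d\<close> onto the generalized eigenspace \<open>V\<^sub>c\<close> of \<open>B\<close> along the other
generalized eigenspaces is a polynomial \<open>q\<^sub>c(B)\<close>: the characteristic polynomial annihilates \<open>B\<close>
(Cayley--Hamilton) and is the product of the pairwise coprime factors \<open>(X - c)^m\<^sub>c\<close>, and the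
\<open>q\<^sub>c\<close> are the corresponding idempotents of the Chinese remainder theorem, summing to \<open>1\<close>.
Symmetry of \<open>\<psi>\<close> and of \<open>B\<^sub>(\<^sub>1\<^sub>)\<psi>\<close> means that \<open>B\<close> acting on any tensor factor of \<open>\<psi>\<close> gives
the same vector; as operators on different factors commute, the same holds for every polynomial
in \<open>B\<close>. Hence \<open>\<phi>\<^sub>c = q\<^sub>c(B)\<^sub>(\<^sub>1\<^sub>)\<psi>\<close> is symmetric and is fixed by the idempotent \<open>q\<^sub>c(B)\<close>
acting on any single factor, so applying \<open>q\<^sub>c(B)\<close> to every factor in turn shows that \<open>\<phi>\<^sub>c\<close>
lies in \<open>V\<^sub>c\<^sup>\<otimes>\<^sup>n\<close>. The \<open>\<phi>\<^sub>c\<close> sum to \<open>\<psi>\<close> because the \<open>q\<^sub>c\<close> sum to \<open>1\<close>.\<close>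

section \<open>Polynomials evaluated at square matrices\<close>

definition poly_mat :: "'a :: comm_ring_1 poly \<Rightarrow> 'a mat \<Rightarrow> 'a mat" where
  "poly_mat p A = fold_coeffs (\<lambda>a M. a \<cdot>\<^sub>m 1\<^sub>m (dim_row A) + A * M) p (0\<^sub>m (dim_row A) (dim_row A))"

context
  fixes A :: "'a :: comm_ring_1 mat" and n :: nat
  assumes A: "A \<in> carrier_mat n n"
begin

lemma poly_mat_0 [simp]: "poly_mat 0 A = 0\<^sub>m n n"
  using A by (simp add: poly_mat_def)

lemma poly_mat_pCons: "poly_mat (pCons a p) A = a \<cdot>\<^sub>m 1\<^sub>m n + A * poly_mat p A"
proof (cases "p = 0")
  case True
  then show ?thesis using A by (cases "a = 0") (auto simp: poly_mat_def)
next
  case False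
  then show ?thesis using A by (simp add: poly_mat_def)
qed

lemma poly_mat_carrier [simp]: "poly_mat p A \<in> carrier_mat n n"
  by (induct p) (use A in \<open>auto simp: poly_mat_pCons\<close>)

lemma poly_mat_dim [simp]: "dim_row (poly_mat p A) = n" "dim_col (poly_mat p A) = n"
  using poly_mat_carrier by blast+

lemma poly_mat_add: "poly_mat (p + q) A = poly_mat p A + poly_mat q A"
proof (induct p arbitrary: q)
  case 0
  then show ?case using A by simp
next
  case (pCons a p)
  obtain b q' where q: "q = pCons b q'" by (cases q) auto
  have "poly_mat (pCons a p + q) A = (a + b) \<cdot>\<^sub>m 1\<^sub>m n + A * (poly_mat p A + poly_mat q' A)"
    unfolding q by (simp add: poly_mat_pCons pCons)
  also have "\<dots> = (a \<cdot>\<^sub>m 1\<^sub>m n + A * poly_mat p A) + (b \<cdot>\<^sub>m 1\<^sub>m n + A * poly_mat q' A)"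
    using A by (intro eq_matI) (auto simp: scalar_prod_def sum.distrib algebra_simps)
  finally show ?case unfolding q poly_mat_pCons .
qed

lemma poly_mat_smult: "poly_mat (Polynomial.smult c p) A = c \<cdot>\<^sub>m poly_mat p A"
proof (induct p)
  case 0
  then show ?case using A by auto
next
  case (pCons a p)
  have "poly_mat (Polynomial.smult c (pCons a p)) A = (c * a) \<cdot>\<^sub>m 1\<^sub>m n + A * (c \<cdot>\<^sub>m poly_mat p A)"
    by (simp add: poly_mat_pCons pCons)
  also have "\<dots> = c \<cdot>\<^sub>m (a \<cdot>\<^sub>m 1\<^sub>m n + A * poly_mat p A)"
    using A by (intro eq_matI) (auto simp: scalar_prod_def sum_distrib_left algebra_simps)
  finally show ?case unfolding poly_mat_pCons .
qed

lemma poly_mat_mult: "poly_mat (p * q) A = poly_mat p A * poly_mat q A"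
proof (induct p)
  case 0
  then show ?case using left_mult_zero_mat[OF poly_mat_carrier] by simp
next
  case (pCons a p)
  let ?P = "poly_mat p A" and ?Q = "poly_mat q A"
  have "poly_mat (pCons a p * q) A = a \<cdot>\<^sub>m ?Q + (0 \<cdot>\<^sub>m 1\<^sub>m n + A * (?P * ?Q))"
    by (simp add: poly_mat_pCons pCons poly_mat_add poly_mat_smult del: pCons_0_0)
  also have "\<dots> = (a \<cdot>\<^sub>m 1\<^sub>m n) * ?Q + (A * ?P) * ?Q"
    using A by (simp add: assoc_mult_mat[of _ n n _ n _ n]) (intro eq_matI, auto)
  also have "\<dots> = (a \<cdot>\<^sub>m 1\<^sub>m n + A * ?P) * ?Q"
    using A by (intro add_mult_distrib_mat[symmetric, of _ n n]) auto
  finally show ?case unfolding poly_mat_pCons .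
qed

lemma poly_mat_1 [simp]: "poly_mat 1 A = 1\<^sub>m n"
proof -
  have "poly_mat [:1:] A = 1\<^sub>m n"
    using poly_mat_pCons[of 1 0] A by simp (intro eq_matI, auto)
  then show ?thesis by (simp add: one_pCons)
qed

lemma poly_mat_linear: "poly_mat [:-c, 1:] A = A - c \<cdot>\<^sub>m 1\<^sub>m n"
  using A by (simp add: poly_mat_pCons) (intro eq_matI, auto)

lemma poly_mat_power: "poly_mat (p ^ k) A = poly_mat p A ^\<^sub>m k"
  by (induct k) (use A in \<open>auto simp: poly_mat_mult power_Suc2 simp del: power_Suc\<close>)

lemma poly_mat_commute: "A * poly_mat p A = poly_mat p A * A"
proof -
  have X: "poly_mat [:0, 1:] A = A"
    using poly_mat_linear[of 0] A by simp (intro eq_matI, auto)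
  show ?thesis
    using poly_mat_mult[of "[:0, 1:]" p] poly_mat_mult[of p "[:0, 1:]"] by (simp add: X mult.commute)
qed

lemma poly_mat_dvd_zero:
  assumes "poly_mat f A = 0\<^sub>m n n" and "f dvd p"
  shows "poly_mat p A = 0\<^sub>m n n"
  using assms A by (auto simp: poly_mat_mult elim!: dvdE)

end

lemma poly_mat_similar:
  assumes "similar_mat_wit A T P Q"
  shows "poly_mat p A = P * poly_mat p T * Q"
proof -
  obtain n where PQ: "P * Q = 1\<^sub>m n" and QP: "Q * P = 1\<^sub>m n" and AT: "A = P * T * Q"
    and T: "T \<in> carrier_mat n n" and P: "P \<in> carrier_mat n n" and Q: "Q \<in> carrier_mat n n"
    using similar_mat_witD[OF refl assms] by blast
  have PTQ: "P * T * Q \<in> carrier_mat n n" using P T Q by simp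
  have square: "X * Y \<in> carrier_mat n n"
    if "X \<in> carrier_mat n n" "Y \<in> carrier_mat n n" for X Y :: "'a mat"
    using that by simp
  have assoc: "X * Y * Z = X * (Y * Z)"
    if "X \<in> carrier_mat n n" "Y \<in> carrier_mat n n" "Z \<in> carrier_mat n n" for X Y Z :: "'a mat"
    using that by (rule assoc_mult_mat)
  have QPX: "Q * (P * X) = X" if X: "X \<in> carrier_mat n n" for X
  proof -
    have "Q * (P * X) = Q * P * X" using assoc[OF Q P X] ..
    then show ?thesis using X by (simp add: QP)
  qed
  show ?thesis
    unfolding AT
  proof (induct p)
    case 0
    then show ?case using P Q T PTQ by (simp add: poly_mat_0[OF PTQ] poly_mat_0[OF T])
  next
    case (pCons a p)
    let ?M = "poly_mat p T"
    have M: "?M \<in> carrier_mat n n" using T by simp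
    have "P * T * Q * poly_mat p (P * T * Q) = P * (T * ?M) * Q"
      using pCons P T Q M by (simp add: assoc square QPX)
    moreover have "P * (a \<cdot>\<^sub>m 1\<^sub>m n) * Q = a \<cdot>\<^sub>m 1\<^sub>m n"
      using P Q PQ by (simp add: mult_smult_distrib[OF P one_carrier_mat] mult_smult_assoc_mat[OF P Q])
    moreover have "P * poly_mat (pCons a p) T * Q = P * (a \<cdot>\<^sub>m 1\<^sub>m n) * Q + P * (T * ?M) * Q"
    proof -
      have "P * (a \<cdot>\<^sub>m 1\<^sub>m n + T * ?M) = P * (a \<cdot>\<^sub>m 1\<^sub>m n) + P * (T * ?M)"
        using P T M by (intro mult_add_distrib_mat) auto
      moreover have "(P * (a \<cdot>\<^sub>m 1\<^sub>m n) + P * (T * ?M)) * Q = P * (a \<cdot>\<^sub>m 1\<^sub>m n) * Q + P * (T * ?M) * Q"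
        using P T M Q by (intro add_mult_distrib_mat) auto
      ultimately show ?thesis by (simp add: poly_mat_pCons[OF T])
    qed
    ultimately show ?case
      by (simp add: poly_mat_pCons[OF PTQ])
  qed
qed

section \<open>The Cayley--Hamilton theorem over \<open>\<complex>\<close>\<close>

lemma upper_triangular_minus_diag_support:
  fixes T :: "'a :: comm_ring_1 mat"
  assumes T: "T \<in> carrier_mat d d" and ut: "upper_triangular T" and k: "k < d"
    and v: "v \<in> carrier_vec d" and vz: "\<And>j. k < j \<Longrightarrow> j < d \<Longrightarrow> v $ j = 0"
    and i: "k \<le> i" "i < d"
  shows "((T - T $$ (k, k) \<cdot>\<^sub>m 1\<^sub>m d) *\<^sub>v v) $ i = 0"
proof -
  have "(T *\<^sub>v v) $ i = (\<Sum>j\<in>{0..<d}. T $$ (i, j) * v $ j)"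
    using T v i by (simp add: mult_mat_vec_def scalar_prod_def)
  also have "\<dots> = T $$ (i, i) * v $ i + (\<Sum>j\<in>{0..<d} - {i}. T $$ (i, j) * v $ j)"
    using i by (subst sum.remove[of _ i]) auto
  also have "(\<Sum>j\<in>{0..<d} - {i}. T $$ (i, j) * v $ j) = 0"
  proof (rule sum.neutral, intro ballI)
    fix j assume j: "j \<in> {0..<d} - {i}"
    show "T $$ (i, j) * v $ j = 0"
    proof (cases "j < i")
      case True
      then show ?thesis using ut T i unfolding upper_triangular_def by auto
    next
      case False
      then show ?thesis using vz j i by auto
    qed
  qed
  finally have Tv: "(T *\<^sub>v v) $ i = T $$ (i, i) * v $ i" by simp
  have "((T - T $$ (k, k) \<cdot>\<^sub>m 1\<^sub>m d) *\<^sub>v v) $ i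
      = (\<Sum>j = 0..<d. T $$ (i, j) * v $ j - (if j = i then T $$ (k, k) * v $ i else 0))"
    using T v i by (auto simp: mult_mat_vec_def scalar_prod_def left_diff_distrib intro!: sum.cong)
  also have "\<dots> = (T *\<^sub>v v) $ i - T $$ (k, k) * v $ i"
    using T v i by (simp add: sum_subtractf mult_mat_vec_def scalar_prod_def)
  also have "\<dots> = 0"
    using Tv vz[of i] i by (cases "i = k") auto
  finally show ?thesis .
qed

lemma upper_triangular_annihilates_support:
  fixes T :: "'a :: comm_ring_1 mat"
  assumes T: "T \<in> carrier_mat d d" and ut: "upper_triangular T"
  shows "k \<le> d \<Longrightarrow> v \<in> carrier_vec d \<Longrightarrow> (\<And>j. k \<le> j \<Longrightarrow> j < d \<Longrightarrow> v $ j = 0) \<Longrightarrow>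
    poly_mat (\<Prod>a\<leftarrow>take k (diag_mat T). [:-a, 1:]) T *\<^sub>v v = 0\<^sub>v d"
proof (induct k arbitrary: v)
  case 0
  then have "v = 0\<^sub>v d" by (intro eq_vecI) auto
  then show ?case using T by simp
next
  case (Suc k)
  have k: "k < d" using Suc by auto
  let ?L = "poly_mat (\<Prod>a\<leftarrow>take k (diag_mat T). [:-a, 1:]) T"
  let ?S = "T - T $$ (k, k) \<cdot>\<^sub>m 1\<^sub>m d"
  have "take (Suc k) (diag_mat T) = take k (diag_mat T) @ [T $$ (k, k)]"
    using T k by (simp add: take_Suc_conv_app_nth diag_mat_def)
  then have "(\<Prod>a\<leftarrow>take (Suc k) (diag_mat T). [:-a, 1:])
      = (\<Prod>a\<leftarrow>take k (diag_mat T). [:-a, 1:]) * [:-T $$ (k, k), 1:]"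
    by simp
  then have "poly_mat (\<Prod>a\<leftarrow>take (Suc k) (diag_mat T). [:-a, 1:]) T = ?L * ?S"
    by (simp only: poly_mat_mult[OF T] poly_mat_linear[OF T])
  then have "poly_mat (\<Prod>a\<leftarrow>take (Suc k) (diag_mat T). [:-a, 1:]) T *\<^sub>v v = ?L * ?S *\<^sub>v v"
    by simp
  also have "\<dots> = ?L *\<^sub>v (?S *\<^sub>v v)"
    using T Suc(3) by (intro assoc_mult_mat_vec) auto
  also have "\<dots> = 0\<^sub>v d"
  proof (rule Suc(1))
    show "?S *\<^sub>v v \<in> carrier_vec d"
      using T Suc(3) by (intro mult_mat_vec_carrier[of _ d d] minus_carrier_mat) auto
    show "((T - T $$ (k, k) \<cdot>\<^sub>m 1\<^sub>m d) *\<^sub>v v) $ j = 0" if "k \<le> j" "j < d" for j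
      using upper_triangular_minus_diag_support[OF T ut k Suc(3) _ that] Suc(4) by simp
  qed (use k in simp)
  finally show ?case .
qed

lemma upper_triangular_annihilated:
  fixes T :: "'a :: comm_ring_1 mat"
  assumes T: "T \<in> carrier_mat d d" and ut: "upper_triangular T"
  shows "poly_mat (\<Prod>a\<leftarrow>diag_mat T. [:-a, 1:]) T = 0\<^sub>m d d"
proof (rule eq_matI)
  let ?L = "poly_mat (\<Prod>a\<leftarrow>diag_mat T. [:-a, 1:]) T"
  have L: "?L \<in> carrier_mat d d" using T by simp
  fix i j assume i: "i < dim_row (0\<^sub>m d d :: 'a mat)" and j: "j < dim_col (0\<^sub>m d d :: 'a mat)"
  have "length (diag_mat T) = d" using T by (simp add: diag_mat_def)
  then have "?L *\<^sub>v unit_vec d j = 0\<^sub>v d"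
    using upper_triangular_annihilates_support[OF T ut, of d "unit_vec d j"] by simp
  moreover have "?L $$ (i, j) = (?L *\<^sub>v unit_vec d j) $ i"
    using L i j by (simp add: mult_mat_vec_def scalar_prod_def unit_vec_def if_distrib cong: if_cong)
  ultimately show "?L $$ (i, j) = 0\<^sub>m d d $$ (i, j)" using i j by simp
qed (use T in auto)

lemma cayley_hamilton_complex:
  fixes A :: "complex mat"
  assumes A: "A \<in> carrier_mat n n"
  shows "poly_mat (char_poly A) A = 0\<^sub>m n n"
proof -
  obtain es where cp: "char_poly A = (\<Prod>a\<leftarrow>es. [:-a, 1:])"
    using char_poly_factorized[OF A] by blast
  obtain T P Q where "schur_decomposition A es = (T, P, Q)"
    by (cases "schur_decomposition A es") auto
  from schur_decomposition[OF A cp this] have sim: "similar_mat_wit A T P Q"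
    and ut: "upper_triangular T" and es: "diag_mat T = es" by auto
  from similar_mat_witD2[OF A sim] have T: "T \<in> carrier_mat n n"
    and P: "P \<in> carrier_mat n n" and Q: "Q \<in> carrier_mat n n" by auto
  have "poly_mat (char_poly A) A = P * poly_mat (\<Prod>a\<leftarrow>diag_mat T. [:-a, 1:]) T * Q"
    unfolding cp es[symmetric] by (rule poly_mat_similar[OF sim])
  then show ?thesis
    using upper_triangular_annihilated[OF T ut] P Q by simp
qed

section \<open>Projections onto the generalized eigenspaces\<close>

lemma char_poly_eigenvalue_factorization:
  fixes A :: "complex mat"
  assumes A: "A \<in> carrier_mat n n"
  shows "finite {c. eigenvalue A c}"
    and "char_poly A = (\<Prod>c | eigenvalue A c. [:-c, 1:] ^ Polynomial.order c (char_poly A))"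
proof -
  have roots: "{c. eigenvalue A c} = {c. poly (char_poly A) c = 0}"
    using eigenvalue_root_char_poly[OF A] by auto
  have lc: "lead_coeff (char_poly A) = 1"
    using degree_monic_char_poly[OF A] by simp
  then have "char_poly A \<noteq> 0" by auto
  then show "finite {c. eigenvalue A c}"
    unfolding roots by (rule poly_roots_finite)
  show "char_poly A = (\<Prod>c | eigenvalue A c. [:-c, 1:] ^ Polynomial.order c (char_poly A))"
    using complex_poly_decompose[of "char_poly A"] unfolding lc roots by simp
qed

lemma coprime_linear_poly:
  fixes c e :: "'a :: field"
  assumes "c \<noteq> e"
  shows "coprime [:-c, 1:] [:-e, 1:]"
proof (rule coprimeI)
  fix x assume "x dvd [:-c, 1:]" "x dvd [:-e, 1:]"
  then have "x dvd [:-c, 1:] - [:-e, 1:]" by (rule dvd_diff)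
  moreover have "is_unit ([:-c, 1:] - [:-e, 1:])"
    using assms by (simp add: is_unit_triv)
  ultimately show "is_unit x" by (rule dvd_unit_imp_unit)
qed

lemma pairwise_coprime_cofactor_combination:
  fixes h :: "'b \<Rightarrow> 'a :: euclidean_ring_gcd"
  assumes "finite S" "S \<noteq> {}" "pairwise (\<lambda>x y. coprime (h x) (h y)) S"
  shows "\<exists>a. (\<Sum>x\<in>S. a x * (\<Prod>y\<in>S - {x}. h y)) = 1"
  using assms
proof (induction S rule: finite_ne_induct)
  case (singleton x)
  show ?case by (rule exI[of _ "\<lambda>_. 1"]) simp
next
  case (insert x S)
  have "pairwise (\<lambda>x y. coprime (h x) (h y)) S"
    using insert.prems by (simp add: pairwise_insert)
  then obtain a where a: "(\<Sum>y\<in>S. a y * (\<Prod>z\<in>S - {y}. h z)) = 1"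
    using insert.IH by blast
  have "coprime (h x) (\<Prod>y\<in>S. h y)"
    using insert.prems insert.hyps by (intro prod_coprime_right) (auto simp: pairwise_def)
  then have "gcd (h x) (\<Prod>y\<in>S. h y) = 1"
    by (simp only: coprime_iff_gcd_eq_1)
  then obtain u v where uv: "u * h x + v * (\<Prod>y\<in>S. h y) = 1"
    using bezout_coefficients_fst_snd[of "h x" "\<Prod>y\<in>S. h y"] by metis
  define a' where "a' y = (if y = x then v else u * a y)" for y
  have rest: "(\<Prod>z\<in>insert x S - {y}. h z) = h x * (\<Prod>z\<in>S - {y}. h z)" if "y \<in> S" for y
  proof -
    have "insert x S - {y} = insert x (S - {y})" using that insert.hyps by auto
    then show ?thesis using insert.hyps by simp
  qed
  have "(\<Sum>y\<in>insert x S. a' y * (\<Prod>z\<in>insert x S - {y}. h z))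
      = a' x * (\<Prod>z\<in>insert x S - {x}. h z) + (\<Sum>y\<in>S. a' y * (\<Prod>z\<in>insert x S - {y}. h z))"
    using insert.hyps by simp
  also have "a' x * (\<Prod>z\<in>insert x S - {x}. h z) = v * (\<Prod>y\<in>S. h y)"
    using insert.hyps by (simp add: a'_def Diff_insert_absorb)
  also have "(\<Sum>y\<in>S. a' y * (\<Prod>z\<in>insert x S - {y}. h z))
      = (\<Sum>y\<in>S. u * h x * (a y * (\<Prod>z\<in>S - {y}. h z)))"
    using insert.hyps rest by (intro sum.cong) (auto simp: a'_def mult_ac)
  also have "\<dots> = u * h x"
    using a by (simp add: sum_distrib_left[symmetric])
  finally show ?case using uv by (intro exI[of _ a']) (simp add: add.commute)
qed

lemma pairwise_coprime_idempotents:
  fixes h :: "'b \<Rightarrow> 'a :: euclidean_ring_gcd"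
  assumes S: "finite S" "S \<noteq> {}" and cop: "pairwise (\<lambda>x y. coprime (h x) (h y)) S"
  obtains e where "(\<Sum>x\<in>S. e x) = 1"
    and "\<And>x. x \<in> S \<Longrightarrow> (\<Prod>y\<in>S. h y) dvd e x * e x - e x"
    and "\<And>x. x \<in> S \<Longrightarrow> (\<Prod>y\<in>S. h y) dvd h x * e x"
proof -
  define g where "g x = (\<Prod>y\<in>S - {x}. h y)" for x
  obtain a where "(\<Sum>x\<in>S. a x * g x) = 1"
    using pairwise_coprime_cofactor_combination[OF assms] unfolding g_def by blast
  moreover define e where "e x = a x * g x" for x
  ultimately have sum: "(\<Sum>x\<in>S. e x) = 1" by simp
  let ?f = "\<Prod>y\<in>S. h y"
  have f: "?f = h x * g x" if "x \<in> S" for x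
    unfolding g_def using S(1) that by (simp add: prod.remove)
  have cross: "?f dvd e x * e y" if "x \<in> S" "y \<in> S" "x \<noteq> y" for x y
  proof -
    have "h x dvd g y" unfolding g_def using that S(1) by (intro dvd_prodI) auto
    then obtain r where "g y = h x * r" ..
    then have "e x * e y = ?f * (a x * a y * r)"
      unfolding e_def f[OF that(1)] by (simp add: mult_ac)
    then show ?thesis by simp
  qed
  show ?thesis
  proof (rule that[OF sum])
    fix x assume x: "x \<in> S"
    have split: "e x + (\<Sum>y\<in>S - {x}. e y) = 1"
      using sum sum.remove[OF S(1) x, of e] by simp
    have "e x * e x - e x + (\<Sum>y\<in>S - {x}. e x * e y) = e x * (e x + (\<Sum>y\<in>S - {x}. e y)) - e x"
      by (simp add: algebra_simps sum_distrib_left)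
    then have "e x * e x - e x = - (\<Sum>y\<in>S - {x}. e x * e y)"
      by (simp add: split eq_neg_iff_add_eq_0)
    then show "?f dvd e x * e x - e x"
      using cross x by (auto intro: dvd_sum)
    show "?f dvd h x * e x"
      unfolding e_def f[OF x] by (simp add: mult_ac)
  qed
qed

lemma spectral_projection_polys:
  fixes A :: "complex mat"
  assumes A: "A \<in> carrier_mat n n"
  obtains q :: "complex \<Rightarrow> complex poly" where
    "\<And>c. eigenvalue A c \<Longrightarrow> poly_mat (q c) A * poly_mat (q c) A = poly_mat (q c) A"
    "\<And>c. eigenvalue A c \<Longrightarrow>
      (A - c \<cdot>\<^sub>m 1\<^sub>m n) ^\<^sub>m Polynomial.order c (char_poly A) * poly_mat (q c) A = 0\<^sub>m n n"
    "poly_mat (\<Sum>c | eigenvalue A c. q c) A = 1\<^sub>m n"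
proof -
  let ?E = "{c. eigenvalue A c}"
  define h where "h c = [:-c, 1:] ^ Polynomial.order c (char_poly A)" for c
  have fin: "finite ?E" and cp: "char_poly A = (\<Prod>c\<in>?E. h c)"
    unfolding h_def using char_poly_eigenvalue_factorization[OF A] by auto
  have zero: "poly_mat p A = 0\<^sub>m n n" if "char_poly A dvd p" for p
    using poly_mat_dvd_zero[OF A cayley_hamilton_complex[OF A] that] .
  show ?thesis
  proof (cases "?E = {}")
    case True
    then have "1\<^sub>m n = (0\<^sub>m n n :: complex mat)" using zero[of 1] cp A by simp
    then have "n = 0" by (metis index_one_mat(1) index_zero_mat(1) neq0_conv zero_neq_one)
    with True A show ?thesis by (intro that[of "\<lambda>_. 0"]) auto
  next
    case False
    have "pairwise (\<lambda>x y. coprime (h x) (h y)) ?E"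
      unfolding h_def pairwise_def
      by (simp add: coprime_linear_poly coprime_power_left_iff coprime_power_right_iff)
    from pairwise_coprime_idempotents[OF fin False this] obtain e
      where sum: "(\<Sum>c\<in>?E. e c) = 1"
        and idem: "\<And>c. c \<in> ?E \<Longrightarrow> char_poly A dvd e c * e c - e c"
        and nil: "\<And>c. c \<in> ?E \<Longrightarrow> char_poly A dvd h c * e c"
      unfolding cp[symmetric] by blast
    show ?thesis
    proof (rule that[of e])
      fix c assume "eigenvalue A c"
      then have c: "c \<in> ?E" by simp
      have "poly_mat (e c) A * poly_mat (e c) A = poly_mat (e c + (e c * e c - e c)) A"
        by (simp add: poly_mat_mult[OF A])
      also have "\<dots> = poly_mat (e c) A"
        unfolding poly_mat_add[OF A] using zero[OF idem[OF c]] A by simp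
      finally show "poly_mat (e c) A * poly_mat (e c) A = poly_mat (e c) A" .
      have "(A - c \<cdot>\<^sub>m 1\<^sub>m n) ^\<^sub>m Polynomial.order c (char_poly A) = poly_mat (h c) A"
        unfolding h_def by (simp add: poly_mat_power[OF A] poly_mat_linear[OF A])
      then show "(A - c \<cdot>\<^sub>m 1\<^sub>m n) ^\<^sub>m Polynomial.order c (char_poly A) * poly_mat (e c) A = 0\<^sub>m n n"
        using zero[OF nil[OF c]] by (simp add: poly_mat_mult[OF A])
    next
      show "poly_mat (\<Sum>c | eigenvalue A c. e c) A = 1\<^sub>m n"
        using sum A by simp
    qed
  qed
qed

section \<open>Matrices acting on one tensor factor\<close>

text \<open>Tensor factors are indexed from \<open>0\<close>: the first factor of the paper is \<open>k = 0\<close>.\<close>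

definition op_at :: "nat \<Rightarrow> complex mat \<Rightarrow> nat \<Rightarrow> nat \<Rightarrow>
    ((nat \<Rightarrow> nat) \<Rightarrow> complex) \<Rightarrow> ((nat \<Rightarrow> nat) \<Rightarrow> complex)" where
  "op_at k Y n d \<psi> = (\<lambda>i. if i \<in> idx n d then (\<Sum>j<d. Y $$ (i k, j) * \<psi> (i(k := j))) else 0)"

lemma op_first_eq_op_at: "op_first Y n d = op_at 0 Y n d"
  unfolding op_first_def op_at_def by (rule ext) simp

lemma idx_less: "i \<in> idx n d \<Longrightarrow> k < n \<Longrightarrow> i k < d"
  unfolding idx_def by auto

lemma idx_fun_upd: "i \<in> idx n d \<Longrightarrow> k < n \<Longrightarrow> j < d \<Longrightarrow> i(k := j) \<in> idx n d"
  unfolding idx_def by auto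

lemma idx_comp_permutes: "\<sigma> permutes {..<n} \<Longrightarrow> i \<in> idx n d \<Longrightarrow> i \<circ> \<sigma> \<in> idx n d"
  using permutes_in_image[of \<sigma>] permutes_not_in[of \<sigma>] unfolding idx_def by fastforce

lemma finite_idx: "finite (idx n d)"
proof -
  have "idx n d \<subseteq> (\<lambda>f k. if k < n then f k else 0) ` ({..<n} \<rightarrow>\<^sub>E {..<d})"
  proof
    fix i assume i: "i \<in> idx n d"
    then have "i = (\<lambda>k. if k < n then restrict i {..<n} k else 0)"
      unfolding idx_def by (auto simp: fun_eq_iff)
    moreover have "restrict i {..<n} \<in> {..<n} \<rightarrow>\<^sub>E {..<d}"
      using i unfolding idx_def by auto
    ultimately show "i \<in> (\<lambda>f k. if k < n then f k else 0) ` ({..<n} \<rightarrow>\<^sub>E {..<d})" by blast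
  qed
  then show ?thesis by (rule finite_subset) (intro finite_imageI finite_PiE, auto)
qed

lemma op_at_in_tensor_space: "op_at k Y n d \<psi> \<in> tensor_space n d"
  unfolding op_at_def tensor_space_def by auto

lemma op_at_zero: "k < n \<Longrightarrow> op_at k (0\<^sub>m d d) n d \<psi> = (\<lambda>i. 0)"
  unfolding op_at_def by (rule ext) (auto intro!: sum.neutral simp: idx_less)

lemma op_at_smult_one:
  assumes "\<psi> \<in> tensor_space n d" and k: "k < n"
  shows "op_at k (a \<cdot>\<^sub>m 1\<^sub>m d) n d \<psi> = (\<lambda>i. a * \<psi> i)"
proof
  fix i
  show "op_at k (a \<cdot>\<^sub>m 1\<^sub>m d) n d \<psi> i = a * \<psi> i"
  proof (cases "i \<in> idx n d")
    case False
    then show ?thesis using assms unfolding op_at_def tensor_space_def by simp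
  next
    case True
    have ik: "i k < d" using idx_less[OF True k] .
    have "(\<Sum>j<d. (a \<cdot>\<^sub>m 1\<^sub>m d) $$ (i k, j) * \<psi> (i(k := j)))
        = (\<Sum>j<d. if j = i k then a * \<psi> (i(k := j)) else 0)"
      using ik by (intro sum.cong) auto
    also have "\<dots> = a * \<psi> i" using ik by simp
    finally show ?thesis unfolding op_at_def using True by simp
  qed
qed

lemma op_at_one: "\<psi> \<in> tensor_space n d \<Longrightarrow> k < n \<Longrightarrow> op_at k (1\<^sub>m d) n d \<psi> = \<psi>"
proof -
  have "1 \<cdot>\<^sub>m 1\<^sub>m d = (1\<^sub>m d :: complex mat)" by (intro eq_matI) auto
  then show "\<psi> \<in> tensor_space n d \<Longrightarrow> k < n \<Longrightarrow> op_at k (1\<^sub>m d) n d \<psi> = \<psi>"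
    using op_at_smult_one[of \<psi> n d k 1] by simp
qed

lemma op_at_add:
  assumes "X \<in> carrier_mat d d" "Y \<in> carrier_mat d d" and k: "k < n"
  shows "op_at k (X + Y) n d \<psi> = (\<lambda>i. op_at k X n d \<psi> i + op_at k Y n d \<psi> i)"
  unfolding op_at_def using assms idx_less[OF _ k]
  by (intro ext) (simp add: sum.distrib distrib_right)

lemma op_at_mult:
  assumes X: "X \<in> carrier_mat d d" and Y: "Y \<in> carrier_mat d d" and k: "k < n"
  shows "op_at k (X * Y) n d \<psi> = op_at k X n d (op_at k Y n d \<psi>)"
proof
  fix i
  show "op_at k (X * Y) n d \<psi> i = op_at k X n d (op_at k Y n d \<psi>) i"
  proof (cases "i \<in> idx n d")
    case False
    then show ?thesis unfolding op_at_def by simp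
  next
    case True
    have ik: "i k < d" using idx_less[OF True k] .
    have "op_at k X n d (op_at k Y n d \<psi>) i
        = (\<Sum>j<d. X $$ (i k, j) * (\<Sum>l<d. Y $$ (j, l) * \<psi> (i(k := l))))"
      unfolding op_at_def using True idx_fun_upd[OF True k] by simp
    also have "\<dots> = (\<Sum>j<d. \<Sum>l<d. X $$ (i k, j) * Y $$ (j, l) * \<psi> (i(k := l)))"
      by (simp add: sum_distrib_left mult_ac)
    also have "\<dots> = (\<Sum>l<d. \<Sum>j<d. X $$ (i k, j) * Y $$ (j, l) * \<psi> (i(k := l)))"
      by (rule sum.swap)
    also have "\<dots> = (\<Sum>l<d. (X * Y) $$ (i k, l) * \<psi> (i(k := l)))"
      using X Y ik by (auto simp: scalar_prod_def sum_distrib_right atLeast0LessThan intro!: sum.cong)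
    finally show ?thesis unfolding op_at_def using True by simp
  qed
qed

lemma op_at_commute:
  assumes "k \<noteq> l" and k: "k < n" and l: "l < n"
  shows "op_at k X n d (op_at l Y n d \<psi>) = op_at l Y n d (op_at k X n d \<psi>)"
proof
  fix i
  show "op_at k X n d (op_at l Y n d \<psi>) i = op_at l Y n d (op_at k X n d \<psi>) i"
  proof (cases "i \<in> idx n d")
    case False
    then show ?thesis unfolding op_at_def by simp
  next
    case True
    have "op_at k X n d (op_at l Y n d \<psi>) i
        = (\<Sum>j<d. \<Sum>m<d. X $$ (i k, j) * Y $$ (i l, m) * \<psi> (i(k := j, l := m)))"
      unfolding op_at_def using True idx_fun_upd[OF True k] assms
      by (simp add: sum_distrib_left mult_ac)
    also have "\<dots> = (\<Sum>m<d. \<Sum>j<d. X $$ (i k, j) * Y $$ (i l, m) * \<psi> (i(l := m, k := j)))"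
      using assms by (subst sum.swap) (simp add: fun_upd_twist)
    also have "\<dots> = op_at l Y n d (op_at k X n d \<psi>) i"
      unfolding op_at_def using True idx_fun_upd[OF True l] assms
      by (simp add: sum_distrib_left mult_ac)
    finally show ?thesis .
  qed
qed

lemma op_at_poly_mat_eq:
  assumes A: "A \<in> carrier_mat d d" and k: "k < n" and l: "l < n"
    and \<psi>: "\<psi> \<in> tensor_space n d" and eq: "op_at k A n d \<psi> = op_at l A n d \<psi>"
  shows "op_at k (poly_mat p A) n d \<psi> = op_at l (poly_mat p A) n d \<psi>"
proof (cases "k = l")
  case False
  show ?thesis
  proof (induct p)
    case 0
    then show ?case using A k l by (simp add: op_at_zero)
  next
    case (pCons a p)
    let ?M = "poly_mat p A"
    have M: "?M \<in> carrier_mat d d" using A by simp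
    have "op_at k (A * ?M) n d \<psi> = op_at k A n d (op_at l ?M n d \<psi>)"
      using op_at_mult[OF A M k] pCons by simp
    also have "\<dots> = op_at l ?M n d (op_at l A n d \<psi>)"
      using op_at_commute[OF False k l] eq by simp
    also have "\<dots> = op_at l (A * ?M) n d \<psi>"
      using op_at_mult[OF M A l] poly_mat_commute[OF A] by simp
    finally have "op_at k (A * ?M) n d \<psi> = op_at l (A * ?M) n d \<psi>" .
    then show ?case
      using A M \<psi> k l by (simp add: poly_mat_pCons[OF A] op_at_add op_at_smult_one)
  qed
qed simp

lemma op_at_poly_mat_sum:
  assumes A: "A \<in> carrier_mat d d" and k: "k < n" and S: "finite S"
  shows "op_at k (poly_mat (\<Sum>c\<in>S. p c) A) n d \<psi> = (\<lambda>i. \<Sum>c\<in>S. op_at k (poly_mat (p c) A) n d \<psi> i)"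
  using S by (induct S rule: finite_induct)
    (use A k in \<open>simp_all add: op_at_zero poly_mat_add[OF A] op_at_add\<close>)

lemma op_at_comp_permutes:
  assumes \<psi>: "\<psi> \<in> sym_space n d" and \<sigma>: "\<sigma> permutes {..<n}" and i: "i \<in> idx n d"
    and k: "k < n"
  shows "op_at k Y n d \<psi> (i \<circ> \<sigma>) = op_at (\<sigma> k) Y n d \<psi> i"
proof -
  have \<sigma>k: "\<sigma> k < n" using permutes_in_image[OF \<sigma>] k by auto
  have "\<psi> ((i \<circ> \<sigma>)(k := j)) = \<psi> (i(\<sigma> k := j))" if "j < d" for j
  proof -
    have "(i \<circ> \<sigma>)(k := j) = i(\<sigma> k := j) \<circ> \<sigma>"
      using permutes_inj[OF \<sigma>] by (auto simp: fun_eq_iff inj_eq)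
    moreover have "\<psi> (i(\<sigma> k := j) \<circ> \<sigma>) = \<psi> (i(\<sigma> k := j))"
      using \<psi> \<sigma> idx_fun_upd[OF i \<sigma>k that] unfolding sym_space_def by blast
    ultimately show ?thesis by simp
  qed
  then show ?thesis
    unfolding op_at_def using i idx_comp_permutes[OF \<sigma> i] by simp
qed

lemma op_at_in_sym_space_iff:
  assumes \<psi>: "\<psi> \<in> sym_space n d" and k: "k < n"
  shows "op_at k Y n d \<psi> \<in> sym_space n d \<longleftrightarrow> (\<forall>l<n. op_at l Y n d \<psi> = op_at k Y n d \<psi>)"
proof
  assume sym: "op_at k Y n d \<psi> \<in> sym_space n d"
  show "\<forall>l<n. op_at l Y n d \<psi> = op_at k Y n d \<psi>"
  proof (intro allI impI ext)
    fix l i assume l: "l < n"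
    show "op_at l Y n d \<psi> i = op_at k Y n d \<psi> i"
    proof (cases "i \<in> idx n d")
      case False
      then show ?thesis unfolding op_at_def by simp
    next
      case True
      have \<sigma>: "transpose k l permutes {..<n}" using k l by (intro permutes_swap_id) auto
      have "op_at l Y n d \<psi> i = op_at k Y n d \<psi> (i \<circ> transpose k l)"
        using op_at_comp_permutes[OF \<psi> \<sigma> True k] by simp
      also have "\<dots> = op_at k Y n d \<psi> i"
        using sym \<sigma> True unfolding sym_space_def by blast
      finally show ?thesis .
    qed
  qed
next
  assume all: "\<forall>l<n. op_at l Y n d \<psi> = op_at k Y n d \<psi>"
  have "op_at k Y n d \<psi> (i \<circ> \<sigma>) = op_at k Y n d \<psi> i"
    if \<sigma>: "\<sigma> permutes {..<n}" and i: "i \<in> idx n d" for \<sigma> i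
  proof -
    have "op_at (\<sigma> k) Y n d \<psi> = op_at k Y n d \<psi>"
      using all permutes_in_image[OF \<sigma>] k by blast
    then show ?thesis using op_at_comp_permutes[OF \<psi> \<sigma> i k] by simp
  qed
  then show "op_at k Y n d \<psi> \<in> sym_space n d"
    unfolding sym_space_def using op_at_in_tensor_space by blast
qed

section \<open>Tensor powers of a subspace\<close>

text \<open>Interpolates between \<open>tensor_space n d\<close> (\<open>m = 0\<close>) and \<open>tensor_power n d V\<close> (\<open>m = n\<close>).\<close>

definition partial_tensor_power ::
    "nat \<Rightarrow> nat \<Rightarrow> nat \<Rightarrow> complex vec set \<Rightarrow> ((nat \<Rightarrow> nat) \<Rightarrow> complex) set" where
  "partial_tensor_power n d m V = {\<psi>. \<exists>(M::nat) (c :: nat \<Rightarrow> complex) (vs :: nat \<Rightarrow> nat \<Rightarrow> complex vec).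
      (\<forall>t<M. \<forall>k<n. vs t k \<in> carrier_vec d \<and> (k < m \<longrightarrow> vs t k \<in> V))
      \<and> \<psi> = (\<lambda>i. \<Sum>t<M. c t * prod_tensor n d (vs t) i)}"

lemma prod_tensor_unit_vec:
  assumes j: "j \<in> idx n d"
  shows "prod_tensor n d (\<lambda>k. unit_vec d (j k)) i = (if i = j then 1 else 0)"
proof (cases "i \<in> idx n d")
  case False
  then show ?thesis using j unfolding prod_tensor_def by auto
next
  case True
  have "(\<Prod>k<n. unit_vec d (j k) $ i k) = (\<Prod>k<n. if i k = j k then (1::complex) else 0)"
    using True unfolding idx_def by (intro prod.cong) (auto simp: unit_vec_def)
  also have "\<dots> = (if \<forall>k<n. i k = j k then 1 else 0)"
    by (induct n) (auto simp: less_Suc_eq)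
  also have "(\<forall>k<n. i k = j k) \<longleftrightarrow> i = j"
    using True j unfolding idx_def by (auto simp: fun_eq_iff) (metis not_le)
  finally show ?thesis unfolding prod_tensor_def using True by simp
qed

lemma tensor_space_subset_partial_tensor_power: "tensor_space n d \<subseteq> partial_tensor_power n d 0 V"
proof
  fix \<psi> assume \<psi>: "\<psi> \<in> tensor_space n d"
  obtain g where g: "bij_betw g {..<card (idx n d)} (idx n d)"
    using ex_bij_betw_nat_finite[OF finite_idx] by (auto simp: atLeast0LessThan)
  then have gin: "g t \<in> idx n d" if "t < card (idx n d)" for t
    using that unfolding bij_betw_def by auto
  have "\<psi> i = (\<Sum>t<card (idx n d). \<psi> (g t) * prod_tensor n d (\<lambda>k. unit_vec d (g t k)) i)" for i
  proof -
    have "(\<Sum>t<card (idx n d). \<psi> (g t) * prod_tensor n d (\<lambda>k. unit_vec d (g t k)) i)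
        = (\<Sum>t<card (idx n d). \<psi> (g t) * (if i = g t then 1 else 0))"
      using gin by (intro sum.cong refl) (simp add: prod_tensor_unit_vec)
    also have "\<dots> = (\<Sum>j\<in>idx n d. \<psi> j * (if i = j then 1 else 0))"
      by (rule sum.reindex_bij_betw[OF g])
    also have "\<dots> = \<psi> i"
      using \<psi> finite_idx unfolding tensor_space_def by (auto simp: if_distrib cong: if_cong)
    finally show ?thesis by simp
  qed
  then have "\<psi> = (\<lambda>i. \<Sum>t<card (idx n d). \<psi> (g t) * prod_tensor n d (\<lambda>k. unit_vec d (g t k)) i)" ..
  moreover have "\<forall>t<card (idx n d). \<forall>k<n. unit_vec d (g t k) \<in> carrier_vec d" by simp
  ultimately show "\<psi> \<in> partial_tensor_power n d 0 V"
    unfolding partial_tensor_power_def mem_Collect_eq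
    by (intro exI[of _ "card (idx n d)"] exI[of _ "\<lambda>t. \<psi> (g t)"] exI[of _ "\<lambda>t k. unit_vec d (g t k)"])
      blast
qed

lemma op_at_prod_tensor:
  assumes P: "P \<in> carrier_mat d d" and m: "m < n" and vs: "\<And>k. k < n \<Longrightarrow> vs k \<in> carrier_vec d"
  shows "op_at m P n d (prod_tensor n d vs) = prod_tensor n d (vs(m := P *\<^sub>v vs m))"
proof
  fix i
  show "op_at m P n d (prod_tensor n d vs) i = prod_tensor n d (vs(m := P *\<^sub>v vs m)) i"
  proof (cases "i \<in> idx n d")
    case False
    then show ?thesis unfolding op_at_def prod_tensor_def by simp
  next
    case True
    have im: "i m < d" using idx_less[OF True m] .
    let ?R = "\<Prod>k\<in>{..<n} - {m}. vs k $ i k"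
    have split: "(\<Prod>k<n. f k) = f m * (\<Prod>k\<in>{..<n} - {m}. f k)" for f :: "nat \<Rightarrow> complex"
      using m by (subst prod.remove[of _ m]) auto
    have "op_at m P n d (prod_tensor n d vs) i = (\<Sum>j<d. P $$ (i m, j) * (vs m $ j * ?R))"
      unfolding op_at_def prod_tensor_def using True idx_fun_upd[OF True m]
      by (simp add: split[of "\<lambda>k. vs k $ _ k"])
    also have "\<dots> = (P *\<^sub>v vs m) $ i m * ?R"
      using P vs[OF m] im
      by (simp add: mult_mat_vec_def scalar_prod_def atLeast0LessThan sum_distrib_left mult_ac)
    also have "\<dots> = prod_tensor n d (vs(m := P *\<^sub>v vs m)) i"
      unfolding prod_tensor_def using True by (simp add: split)
    finally show ?thesis .
  qed
qed

lemma op_at_sum: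
  "op_at m P n d (\<lambda>i. \<Sum>t<M. c t * F t i) = (\<lambda>i. \<Sum>t<M. c t * op_at m P n d (F t) i)"
proof
  fix i
  show "op_at m P n d (\<lambda>i. \<Sum>t<M. c t * F t i) i = (\<Sum>t<M. c t * op_at m P n d (F t) i)"
  proof (cases "i \<in> idx n d")
    case True
    have "(\<Sum>j<d. P $$ (i m, j) * (\<Sum>t<M. c t * F t (i(m := j))))
        = (\<Sum>j<d. \<Sum>t<M. c t * (P $$ (i m, j) * F t (i(m := j))))"
      by (simp add: sum_distrib_left mult_ac)
    also have "\<dots> = (\<Sum>t<M. c t * (\<Sum>j<d. P $$ (i m, j) * F t (i(m := j))))"
      by (subst sum.swap) (simp add: sum_distrib_left)
    finally show ?thesis unfolding op_at_def using True by simp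
  qed (simp add: op_at_def)
qed

lemma op_at_in_partial_tensor_power:
  assumes P: "P \<in> carrier_mat d d" and m: "m < n"
    and PV: "\<And>v. v \<in> carrier_vec d \<Longrightarrow> P *\<^sub>v v \<in> V"
    and \<phi>: "\<phi> \<in> partial_tensor_power n d m V"
  shows "op_at m P n d \<phi> \<in> partial_tensor_power n d (Suc m) V"
proof -
  from \<phi>[unfolded partial_tensor_power_def mem_Collect_eq] obtain M :: nat and c vs
    where vs: "\<forall>t<M. \<forall>k<n. vs t k \<in> carrier_vec d \<and> (k < m \<longrightarrow> vs t k \<in> V)"
      and \<phi>_eq: "\<phi> = (\<lambda>i. \<Sum>t<M. c t * prod_tensor n d (vs t) i)"
    by blast
  define vs' where "vs' t = (vs t)(m := P *\<^sub>v vs t m)" for t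
  have "op_at m P n d \<phi> = (\<lambda>i. \<Sum>t<M. c t * op_at m P n d (prod_tensor n d (vs t)) i)"
    unfolding \<phi>_eq by (rule op_at_sum)
  also have "\<dots> = (\<lambda>i. \<Sum>t<M. c t * prod_tensor n d (vs' t) i)"
    unfolding vs'_def using vs by (intro ext sum.cong refl) (simp add: op_at_prod_tensor[OF P m])
  finally have "op_at m P n d \<phi> = (\<lambda>i. \<Sum>t<M. c t * prod_tensor n d (vs' t) i)" .
  moreover have "\<forall>t<M. \<forall>k<n. vs' t k \<in> carrier_vec d \<and> (k < Suc m \<longrightarrow> vs' t k \<in> V)"
    unfolding vs'_def using vs P PV m by (auto simp: less_Suc_eq)
  ultimately show ?thesis unfolding partial_tensor_power_def by blast
qed

lemma op_at_idempotent_in_tensor_power: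
  assumes P: "P \<in> carrier_mat d d" and \<psi>: "\<psi> \<in> tensor_space n d" and n: "0 < n"
    and idem: "P * P = P" and eq: "\<And>k. k < n \<Longrightarrow> op_at k P n d \<psi> = op_at 0 P n d \<psi>"
    and PV: "\<And>v. v \<in> carrier_vec d \<Longrightarrow> P *\<^sub>v v \<in> V"
  shows "op_at 0 P n d \<psi> \<in> tensor_power n d V"
proof -
  let ?\<phi> = "op_at 0 P n d \<psi>"
  have fixed: "op_at k P n d ?\<phi> = ?\<phi>" if k: "k < n" for k
  proof (cases "k = 0")
    case True
    then show ?thesis using op_at_mult[OF P P n] idem by simp
  next
    case False
    have "op_at k P n d ?\<phi> = op_at 0 P n d (op_at k P n d \<psi>)"
      using op_at_commute[OF False k n] .
    also have "\<dots> = op_at 0 (P * P) n d \<psi>"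
      using eq[OF k] op_at_mult[OF P P n] by simp
    finally show ?thesis using idem by simp
  qed
  have "?\<phi> \<in> partial_tensor_power n d (Suc m) V" if "m < n" for m
    using that
  proof (induction m)
    case 0
    show ?case
      using op_at_in_partial_tensor_power[OF P n PV tensor_space_subset_partial_tensor_power[THEN subsetD, OF \<psi>]]
      by simp
  next
    case (Suc m)
    then have "?\<phi> \<in> partial_tensor_power n d (Suc m) V" by simp
    from op_at_in_partial_tensor_power[OF P Suc.prems PV this] show ?case
      using fixed[OF Suc.prems] by simp
  qed
  from this[of "n - 1"] n have "?\<phi> \<in> partial_tensor_power n d n V" by simp
  then show ?thesis
    unfolding partial_tensor_power_def tensor_power_def by blast
qed

lemma mult_mat_vec_in_gen_eigenspace:
  assumes A: "A \<in> carrier_mat d d" and P: "P \<in> carrier_mat d d"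
    and nil: "(A - c \<cdot>\<^sub>m 1\<^sub>m d) ^\<^sub>m m * P = 0\<^sub>m d d" and v: "v \<in> carrier_vec d"
  shows "P *\<^sub>v v \<in> gen_eigenspace A c"
proof -
  have "(A - c \<cdot>\<^sub>m 1\<^sub>m d) ^\<^sub>m m *\<^sub>v (P *\<^sub>v v) = ((A - c \<cdot>\<^sub>m 1\<^sub>m d) ^\<^sub>m m * P) *\<^sub>v v"
    using A P v by (intro assoc_mult_mat_vec[symmetric]) auto
  also have "\<dots> = 0\<^sub>v d"
    using nil v by (simp, intro eq_vecI) (auto simp: scalar_prod_def)
  finally show ?thesis
    unfolding gen_eigenspace_def using A P v by auto
qed

lemma op_at_poly_mat_in_sym_power:
  assumes A: "A \<in> carrier_mat d d" and \<psi>: "\<psi> \<in> sym_space n d" and n: "0 < n"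
    and A_sym: "op_at 0 A n d \<psi> \<in> sym_space n d"
    and idem: "poly_mat q A * poly_mat q A = poly_mat q A"
    and nil: "(A - c \<cdot>\<^sub>m 1\<^sub>m d) ^\<^sub>m m * poly_mat q A = 0\<^sub>m d d"
  shows "op_at 0 (poly_mat q A) n d \<psi> \<in> sym_power n d (gen_eigenspace A c)"
proof -
  have \<psi>T: "\<psi> \<in> tensor_space n d" using \<psi> unfolding sym_space_def by blast
  have P: "poly_mat q A \<in> carrier_mat d d" using A by simp
  have eq: "op_at k (poly_mat q A) n d \<psi> = op_at 0 (poly_mat q A) n d \<psi>" if k: "k < n" for k
    using A_sym op_at_in_sym_space_iff[OF \<psi> n] k by (intro op_at_poly_mat_eq[OF A k n \<psi>T]) blast
  then have "op_at 0 (poly_mat q A) n d \<psi> \<in> sym_space n d"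
    using op_at_in_sym_space_iff[OF \<psi> n] by blast
  moreover have "op_at 0 (poly_mat q A) n d \<psi> \<in> tensor_power n d (gen_eigenspace A c)"
    using op_at_idempotent_in_tensor_power[OF P \<psi>T n idem eq]
      mult_mat_vec_in_gen_eigenspace[OF A P nil] by blast
  ultimately show ?thesis unfolding sym_power_def by blast
qed

theorem theorem4:
  fixes B :: "complex mat" and n d :: nat
    and \<psi> :: "(nat \<Rightarrow> nat) \<Rightarrow> complex"
  assumes "n \<ge> 2"
    and "B \<in> carrier_mat d d"
    and "\<psi> \<in> sym_space n d"
    and "op_first B n d \<psi> \<in> sym_space n d"
  shows "\<exists>\<phi> :: complex \<Rightarrow> (nat \<Rightarrow> nat) \<Rightarrow> complex.
           (\<forall>c\<in>{c. eigenvalue B c}. \<phi> c \<in> sym_power n d (gen_eigenspace B c))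
         \<and> \<psi> = (\<lambda>i. \<Sum>c\<in>{c. eigenvalue B c}. \<phi> c i)"
proof -
  have n: "0 < n" and B: "B \<in> carrier_mat d d" and \<psi>: "\<psi> \<in> sym_space n d"
    using assms(1-3) by auto
  have B_sym: "op_at 0 B n d \<psi> \<in> sym_space n d"
    using assms(4) unfolding op_first_eq_op_at .
  obtain q where idem: "\<And>c. eigenvalue B c \<Longrightarrow> poly_mat (q c) B * poly_mat (q c) B = poly_mat (q c) B"
    and nil: "\<And>c. eigenvalue B c \<Longrightarrow>
      (B - c \<cdot>\<^sub>m 1\<^sub>m d) ^\<^sub>m Polynomial.order c (char_poly B) * poly_mat (q c) B = 0\<^sub>m d d"
    and sum: "poly_mat (\<Sum>c | eigenvalue B c. q c) B = 1\<^sub>m d"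
    using spectral_projection_polys[OF B] by blast
  define \<phi> where "\<phi> c = op_at 0 (poly_mat (q c) B) n d \<psi>" for c
  have "\<phi> c \<in> sym_power n d (gen_eigenspace B c)" if c: "eigenvalue B c" for c
    unfolding \<phi>_def by (rule op_at_poly_mat_in_sym_power[OF B \<psi> n B_sym idem[OF c] nil[OF c]])
  moreover have "\<psi> = op_at 0 (poly_mat (\<Sum>c | eigenvalue B c. q c) B) n d \<psi>"
    using sum op_at_one[of \<psi> n d 0] \<psi> n unfolding sym_space_def by simp
  then have "\<psi> = (\<lambda>i. \<Sum>c | eigenvalue B c. \<phi> c i)"
    unfolding \<phi>_def op_at_poly_mat_sum[OF B n char_poly_eigenvalue_factorization(1)[OF B]] .
  ultimately show ?thesis by blast
qed

end
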